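(* Let $\pi=(\pi_1,\ldots,\pi_n)$ be a permutation of $\{1,\ldots,n\}$ that is convex, i.e. $\pi_2-\pi_1\le\pi_3-\pi_2\le\cdots\le\pi_n-\pi_{n-1}$, and let $P$ be its permutation matrix. Then for each $k\le n$, the set $I_k(P)$ of rows of $P$ containing a $1$ in one of the first $k$ columns (equivalently $I_k(P)=\{i:\pi_i\le k\}$) is an interval of length $k$, i.e. a set of $k$ consecutive integers.
   Context: The permutation matrix $P$ of $\pi$ is the $n\times n$ $(0,1)$-matrix with $1$ in positions $(i,\pi_i)$. An interval in $\{1,\ldots,n\}$ is a set $\{k,k+1,\ldots,l\}$ with $1\le k\le l\le n$; its length is $l-k+1$. *)

theory Defs
  imports "HOL-Combinatorics.Permutations"
begin

text \<open>A permutation pi of {1..n} is a function nat => nat with pi permutes {1..n};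
  its i-th entry pi_i is pi i.\<close>

definition convex_perm :: "nat \<Rightarrow> (nat \<Rightarrow> nat) \<Rightarrow> bool" where
  "convex_perm n \<pi> \<longleftrightarrow>
     (\<forall>i. 2 \<le> i \<and> i + 1 \<le> n \<longrightarrow>
        int (\<pi> i) - int (\<pi> (i - 1)) \<le> int (\<pi> (i + 1)) - int (\<pi> i))"

definition perm_matrix :: "(nat \<Rightarrow> nat) \<Rightarrow> nat \<Rightarrow> nat \<Rightarrow> nat" where
  "perm_matrix \<pi> i j = (if \<pi> i = j then 1 else 0)"

definition I_rows :: "nat \<Rightarrow> nat \<Rightarrow> (nat \<Rightarrow> nat \<Rightarrow> nat) \<Rightarrow> nat set" where
  "I_rows n k P = {i \<in> {1..n}. \<exists>j \<in> {1..k}. P i j = 1}"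

definition is_interval_len :: "nat \<Rightarrow> nat \<Rightarrow> nat set \<Rightarrow> bool" where
  "is_interval_len n len S \<longleftrightarrow>
     (\<exists>a l. 1 \<le> a \<and> a \<le> l \<and> l \<le> n \<and> S = {a..l} \<and> l + 1 - a = len)"

end

theory Submission
  imports Defs
begin

(* The sequence pi_1, ..., pi_n is convex, so on any segment it is bounded by its value at one
   of the endpoints: once an increment is positive all later increments are, and otherwise all
   earlier ones are not. Hence the sublevel set {i. pi_i <= k} contains every index lying between
   two of its elements, i.e. it is a set of consecutive integers, and it has exactly k elements
   because pi maps it bijectively onto {1..k}. *)

definition convex_seq :: "nat \<Rightarrow> nat \<Rightarrow> (nat \<Rightarrow> 'a::ordered_ab_group_add) \<Rightarrow> bool" where
  "convex_seq a b f \<longleftrightarrow> (\<forall>i. a < i \<and> i < b \<longrightarrow> f i - f (i - 1) \<le> f (i + 1) - f i)"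

lemma convex_perm_iff_convex_seq: "convex_perm n \<pi> \<longleftrightarrow> convex_seq 1 n (\<lambda>i. int (\<pi> i))"
  unfolding convex_perm_def convex_seq_def
  by (intro arg_cong[where f=All] ext) (auto simp: Suc_le_eq Suc_eq_plus1[symmetric])

lemma convex_seq_diff_mono:
  assumes "convex_seq a b f" "a \<le> i" "i \<le> j" "j < b"
  shows "f (i + 1) - f i \<le> f (j + 1) - f j"
  using assms(3,4)
proof (induction j rule: dec_induct)
  case base
  then show ?case by simp
next
  case (step m)
  have "a < m + 1" "m + 1 < b" using assms(2) step by auto
  then have "f (m + 1) - f m \<le> f (m + 1 + 1) - f (m + 1)"
    using assms(1) unfolding convex_seq_def by fastforce
  with step show ?case by simp
qed

lemma convex_seq_le_max:
  fixes f :: "nat \<Rightarrow> 'a::linordered_ab_group_add"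
  assumes convex: "convex_seq a b f" and "a \<le> i" "i \<le> j" "j \<le> l" "l \<le> b"
  shows "f j \<le> max (f i) (f l)"
proof (cases "i = j")
  case True
  then show ?thesis by simp
next
  case False
  with assms have "i < j" "j \<le> b" by auto
  define D where "D = f j - f (j - 1)"
  have D_le_diff: "D \<le> f (q + 1) - f q" if "j \<le> q" "q < b" for q
    using convex_seq_diff_mono[OF convex, of "j - 1" q] \<open>a \<le> i\<close> \<open>i < j\<close> that
    unfolding D_def by simp
  have diff_le_D: "f (q + 1) - f q \<le> D" if "a \<le> q" "q < j" for q
    using convex_seq_diff_mono[OF convex, of q "j - 1"] \<open>j \<le> b\<close> that
    unfolding D_def by simp
  show ?thesis
  proof (cases "D > 0")
    case True
    have "f j \<le> f m" if "j \<le> m" "m \<le> l" for m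
      using that(1)
    proof (induction m rule: dec_induct)
      case (step q)
      have "0 < f (q + 1) - f q"
        using step.hyps \<open>m \<le> l\<close> \<open>l \<le> b\<close> by (intro less_le_trans[OF True D_le_diff]) auto
      with step.IH show ?case by simp
    qed simp
    with \<open>j \<le> l\<close> show ?thesis by (simp add: le_max_iff_disj)
  next
    case False
    have "f j \<le> f m" if "i \<le> m" "m \<le> j" for m
      using that(2)
    proof (induction m rule: inc_induct)
      case (step q)
      have "f (q + 1) - f q \<le> 0"
        using step.hyps \<open>a \<le> i\<close> \<open>i \<le> m\<close> False
        by (intro order.trans[OF diff_le_D]) auto
      with step.IH show ?case by simp
    qed simp
    with \<open>i \<le> j\<close> show ?thesis by (simp add: le_max_iff_disj)
  qed
qed

lemma finite_order_convex_eq_atLeastAtMost: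
  fixes S :: "'a::linorder set"
  assumes "finite S" "S \<noteq> {}"
    and "\<And>i j l. i \<in> S \<Longrightarrow> l \<in> S \<Longrightarrow> i \<le> j \<Longrightarrow> j \<le> l \<Longrightarrow> j \<in> S"
  shows "S = {Min S..Max S}"
proof
  show "S \<subseteq> {Min S..Max S}" using assms(1) by auto
  have "Min S \<in> S" "Max S \<in> S" using assms(1,2) by auto
  then show "{Min S..Max S} \<subseteq> S" by (meson assms(3) atLeastAtMost_iff subsetI)
qed

lemma is_interval_lenI:
  assumes "S \<subseteq> {1..n}" "S \<noteq> {}" "card S = len"
    and "\<And>i j l. i \<in> S \<Longrightarrow> l \<in> S \<Longrightarrow> i \<le> j \<Longrightarrow> j \<le> l \<Longrightarrow> j \<in> S"
  shows "is_interval_len n len S"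
proof -
  have "finite S" using assms(1) finite_subset by blast
  then have S: "S = {Min S..Max S}"
    using assms(2,4) by (rule finite_order_convex_eq_atLeastAtMost)
  have "Min S \<in> S" "Max S \<in> S" using \<open>finite S\<close> assms(2) by auto
  then have "1 \<le> Min S" "Min S \<le> Max S" "Max S \<le> n"
    using assms(1) S by auto
  moreover have "Max S + 1 - Min S = len"
    using assms(3) S by (metis card_atLeastAtMost Suc_eq_plus1)
  ultimately show ?thesis
    unfolding is_interval_len_def using S by blast
qed

lemma I_rows_perm_matrix: "I_rows n k (perm_matrix \<pi>) = {i \<in> {1..n}. \<pi> i \<in> {1..k}}"
  unfolding I_rows_def perm_matrix_def by auto

lemma card_permutes_preimage:
  assumes "\<pi> permutes A" "B \<subseteq> A"
  shows "card {i \<in> A. \<pi> i \<in> B} = card B"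
proof -
  have "{i \<in> A. \<pi> i \<in> B} = \<pi> -` B"
    using assms permutes_not_in by fastforce
  then show ?thesis
    using assms(1) by (simp add: card_vimage_inj permutes_inj permutes_surj)
qed

theorem lemma4p2:
  fixes n k :: nat and \<pi> :: "nat \<Rightarrow> nat"
  assumes "\<pi> permutes {1..n}"
    and "convex_perm n \<pi>"
    and "1 \<le> k" and "k \<le> n"
  shows "is_interval_len n k (I_rows n k (perm_matrix \<pi>))"
proof -
  define S where "S = {i \<in> {1..n}. \<pi> i \<in> {1..k}}"
  have card_S: "card S = k"
    using card_permutes_preimage[OF assms(1), of "{1..k}"] assms(4) unfolding S_def by simp
  have S_order_convex: "j \<in> S" if "i \<in> S" "l \<in> S" "i \<le> j" "j \<le> l" for i j l
  proof -
    have "j \<in> {1..n}" using that unfolding S_def by auto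
    then have "\<pi> j \<ge> 1" using permutes_in_image[OF assms(1)] by auto
    moreover have "int (\<pi> j) \<le> max (int (\<pi> i)) (int (\<pi> l))"
      using assms(2) that unfolding convex_perm_iff_convex_seq S_def
      by (intro convex_seq_le_max) auto
    ultimately show ?thesis using that \<open>j \<in> {1..n}\<close> unfolding S_def by auto
  qed
  have "S \<subseteq> {1..n}" unfolding S_def by blast
  moreover have "S \<noteq> {}" using card_S assms(3) by auto
  ultimately show ?thesis
    unfolding I_rows_perm_matrix S_def[symmetric] using card_S S_order_convex
    by (rule is_interval_lenI)
qed

end
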